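(* For every integer $n\ge 7$ there exists a $2$-connected detour covered graph of order $n$ which is not cummerbund covered. For every integer $n\ge 12$ there exists a $2$-connected cummerbund covered graph of order $n$ which is not detour covered.
   Context: All graphs are finite and simple. A detour of a graph is a longest path in the graph, and a cummerbund is a longest cycle. A graph is detour covered if every vertex lies in some detour, and cummerbund covered if every vertex lies in some cummerbund. *)

theory Defs
  imports Main
begin

definition simple_graph :: "'a set \<Rightarrow> ('a \<Rightarrow> 'a \<Rightarrow> bool) \<Rightarrow> bool" where
  "simple_graph V E \<longleftrightarrow> finite V \<and> (\<forall>x y. E x y \<longrightarrow> x \<in> V \<and> y \<in> V)
     \<and> (\<forall>x y. E x y \<longrightarrow> E y x) \<and> (\<forall>x. \<not> E x x)"

definition induced :: "('a \<Rightarrow> 'a \<Rightarrow> bool) \<Rightarrow> 'a set \<Rightarrow> 'a \<Rightarrow> 'a \<Rightarrow> bool" where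
  "induced E S = (\<lambda>x y. E x y \<and> x \<in> S \<and> y \<in> S)"

definition connected_graph :: "'a set \<Rightarrow> ('a \<Rightarrow> 'a \<Rightarrow> bool) \<Rightarrow> bool" where
  "connected_graph V E \<longleftrightarrow> V \<noteq> {} \<and> (\<forall>u\<in>V. \<forall>v\<in>V. (induced E V)\<^sup>*\<^sup>* u v)"

definition k_connected :: "nat \<Rightarrow> 'a set \<Rightarrow> ('a \<Rightarrow> 'a \<Rightarrow> bool) \<Rightarrow> bool" where
  "k_connected k V E \<longleftrightarrow> card V > k \<and>
     (\<forall>X. X \<subseteq> V \<and> card X < k \<longrightarrow> connected_graph (V - X) (induced E (V - X)))"

text \<open>A path is a nonempty list of distinct vertices, consecutive ones adjacent.
  Its length (number of edges) is length xs - 1.\<close>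
definition is_path :: "'a set \<Rightarrow> ('a \<Rightarrow> 'a \<Rightarrow> bool) \<Rightarrow> 'a list \<Rightarrow> bool" where
  "is_path V E xs \<longleftrightarrow> xs \<noteq> [] \<and> distinct xs \<and> set xs \<subseteq> V \<and>
     (\<forall>i. Suc i < length xs \<longrightarrow> E (xs ! i) (xs ! Suc i))"

definition is_cycle :: "'a set \<Rightarrow> ('a \<Rightarrow> 'a \<Rightarrow> bool) \<Rightarrow> 'a list \<Rightarrow> bool" where
  "is_cycle V E xs \<longleftrightarrow> is_path V E xs \<and> length xs \<ge> 3 \<and> E (last xs) (hd xs)"

definition is_detour :: "'a set \<Rightarrow> ('a \<Rightarrow> 'a \<Rightarrow> bool) \<Rightarrow> 'a list \<Rightarrow> bool" where
  "is_detour V E xs \<longleftrightarrow> is_path V E xs \<and> (\<forall>ys. is_path V E ys \<longrightarrow> length ys \<le> length xs)"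

definition is_cummerbund :: "'a set \<Rightarrow> ('a \<Rightarrow> 'a \<Rightarrow> bool) \<Rightarrow> 'a list \<Rightarrow> bool" where
  "is_cummerbund V E xs \<longleftrightarrow> is_cycle V E xs \<and> (\<forall>ys. is_cycle V E ys \<longrightarrow> length ys \<le> length xs)"

definition detour_covered :: "'a set \<Rightarrow> ('a \<Rightarrow> 'a \<Rightarrow> bool) \<Rightarrow> bool" where
  "detour_covered V E \<longleftrightarrow> (\<forall>v\<in>V. \<exists>xs. is_detour V E xs \<and> v \<in> set xs)"

definition cummerbund_covered :: "'a set \<Rightarrow> ('a \<Rightarrow> 'a \<Rightarrow> bool) \<Rightarrow> bool" where
  "cummerbund_covered V E \<longleftrightarrow> (\<forall>v\<in>V. \<exists>xs. is_cummerbund V E xs \<and> v \<in> set xs)"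

end

theory Submission
  imports Defs
begin

(* The first is the cycle 0, 1, ..., n - 2 together with a vertex
   n - 1 joined to 0 and 3. It has a Hamiltonian path, so every vertex lies on a detour; but a
   cycle through n - 1 misses either 1, 2 or all of 4, ..., n - 2, so it is shorter than the
   base cycle.
   The second joins a vertex 0 to each of the hubs 1 and 2 by two paths of length 3 and adds
   n - 11 vertices adjacent to exactly 1 and 2. Its longest cycles have 8 vertices and cover the
   graph, but a path through a vertex w >= 11 has at most 10 vertices, while the arms alone carry
   a path with 11.
   All length bounds come from one count: if f is constant on the components of G - S, then a
   path meeting S in s vertices takes at most s + 1 values of f outside S, and a cycle at most
   max 1 s. *)

lemma is_path_iff_successively:
  "is_path V E xs \<longleftrightarrow> xs \<noteq> [] \<and> distinct xs \<and> set xs \<subseteq> V \<and> successively E xs"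
  by (simp add: is_path_def successively_conv_nth)

lemma is_detour_if_spanning_path:
  assumes "finite V" "is_path V E xs" "set xs = V"
  shows "is_detour V E xs"
proof -
  have "length ys \<le> length xs" if "is_path V E ys" for ys
  proof -
    have "length ys = card (set ys)" using that by (simp add: is_path_def distinct_card)
    also have "\<dots> \<le> card V" using that assms(1) by (intro card_mono) (auto simp: is_path_def)
    also have "\<dots> = length xs" using assms(2,3) distinct_card by (fastforce simp: is_path_def)
    finally show ?thesis .
  qed
  then show ?thesis using assms(2) by (simp add: is_detour_def)
qed

lemma detour_covered_if_spanning_path:
  "finite V \<Longrightarrow> is_path V E xs \<Longrightarrow> set xs = V \<Longrightarrow> detour_covered V E"
  using is_detour_if_spanning_path by (fastforce simp: detour_covered_def)

lemma not_detour_covered_if_longer_path: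
  assumes "v \<in> V" "is_path V E ys"
    and "\<And>xs. is_path V E xs \<Longrightarrow> v \<in> set xs \<Longrightarrow> length xs < length ys"
  shows "\<not> detour_covered V E"
  using assms by (force simp: detour_covered_def is_detour_def)

lemma not_cummerbund_covered_if_longer_cycle:
  assumes "v \<in> V" "is_cycle V E ys"
    and "\<And>xs. is_cycle V E xs \<Longrightarrow> v \<in> set xs \<Longrightarrow> length xs < length ys"
  shows "\<not> cummerbund_covered V E"
  using assms by (force simp: cummerbund_covered_def is_cummerbund_def)

lemma cummerbund_coveredI:
  assumes "\<And>xs. is_cycle V E xs \<Longrightarrow> length xs \<le> m"
    and "\<And>v. v \<in> V \<Longrightarrow> \<exists>xs. is_cycle V E xs \<and> length xs = m \<and> v \<in> set xs"
  shows "cummerbund_covered V E"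
  using assms by (fastforce simp: cummerbund_covered_def is_cummerbund_def)

lemma rtranclp_hd_if_successively:
  assumes "successively R ws" "symp R" "x \<in> set ws"
  shows "R\<^sup>*\<^sup>* x (hd ws)"
  using assms(1,3)
proof (induction ws rule: induct_list012)
  case (3 y z zs)
  then have "R\<^sup>*\<^sup>* x z \<or> x = y" by auto
  moreover have "R z y" using "3.prems"(1) sympD[OF assms(2)] by auto
  ultimately show ?case by auto
qed auto

lemma connected_graph_if_dominating_walk:
  assumes "symp E" "successively E ws" "ws \<noteq> []" "set ws \<subseteq> W"
    and "\<And>u. u \<in> W \<Longrightarrow> u \<in> set ws \<or> (\<exists>w\<in>set ws. E u w)"
  shows "connected_graph W (induced E W)"
proof -
  let ?R = "induced E W"
  have "symp ?R" using assms(1) by (auto simp: symp_def induced_def)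
  have walk: "successively ?R ws"
    using assms(2,4) by (auto elim: successively_mono simp: induced_def)
  have to_hd: "?R\<^sup>*\<^sup>* u (hd ws)" if "u \<in> W" for u
    using assms(5)[OF that]
  proof
    assume "u \<in> set ws"
    then show ?thesis using rtranclp_hd_if_successively[OF walk \<open>symp ?R\<close>] by blast
  next
    assume "\<exists>w\<in>set ws. E u w"
    then obtain w where "w \<in> set ws" "E u w" by blast
    then have "?R u w" "?R\<^sup>*\<^sup>* w (hd ws)"
      using that assms(4) rtranclp_hd_if_successively[OF walk \<open>symp ?R\<close>] by (auto simp: induced_def)
    then show ?thesis by simp
  qed
  have "?R\<^sup>*\<^sup>* u v" if "u \<in> W" "v \<in> W" for u v
    using to_hd[OF that(1)] sympD[OF symp_rtranclp[OF \<open>symp ?R\<close>] to_hd[OF that(2)]] by simp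
  moreover have "W \<noteq> {}" using assms(3,4) by auto
  moreover have "induced ?R W = ?R" by (auto simp: induced_def fun_eq_iff)
  ultimately show ?thesis by (simp add: connected_graph_def)
qed

lemma two_connectedI:
  assumes "2 < card V" "connected_graph V (induced E V)"
    and "\<And>x. x \<in> V \<Longrightarrow> connected_graph (V - {x}) (induced E (V - {x}))"
  shows "k_connected 2 V E"
  unfolding k_connected_def
proof (intro conjI allI impI)
  fix X assume X: "X \<subseteq> V \<and> card X < 2"
  have "finite X" using X card_ge_0_finite[of V] assms(1) finite_subset by auto
  moreover have "card X = 0 \<or> card X = 1" using X by linarith
  ultimately consider "X = {}" | x where "X = {x}"
    using card_1_singletonE by auto
  then show "connected_graph (V - X) (induced E (V - X))"
  proof cases
    case 1
    then show ?thesis using assms(2) by simp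
  next
    case (2 x)
    then show ?thesis using assms(3) X by simp
  qed
qed (use assms(1) in simp)

definition component_labelling :: "('a \<Rightarrow> 'a \<Rightarrow> bool) \<Rightarrow> 'a set \<Rightarrow> ('a \<Rightarrow> 'b) \<Rightarrow> bool" where
  "component_labelling E S f \<longleftrightarrow> (\<forall>x y. E x y \<longrightarrow> x \<notin> S \<longrightarrow> y \<notin> S \<longrightarrow> f x = f y)"

(* Each maximal run of the walk outside S carries a single label, and every run except possibly
   the first is entered from a vertex of S. *)
lemma card_labels_distinct_walk:
  assumes "successively E xs" "distinct xs" "component_labelling E S f"
  shows "card (f ` (set xs - S)) \<le> card (set xs \<inter> S) + (if xs \<noteq> [] \<and> hd xs \<in> S then 0 else 1)"
  using assms(1,2)
proof (induction xs rule: induct_list012)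
  case (3 x y ys)
  let ?labels = "\<lambda>zs. f ` (set zs - S)"
  have IH: "card (?labels (y # ys)) \<le> card (set (y # ys) \<inter> S) + (if y \<in> S then 0 else 1)"
    using "3.IH"(2) "3.prems" by simp
  show ?case
  proof (cases "x \<in> S")
    case True
    then have "?labels (x # y # ys) = ?labels (y # ys)"
      and "card (set (x # y # ys) \<inter> S) = Suc (card (set (y # ys) \<inter> S))"
      using "3.prems"(2) by auto
    then show ?thesis using IH True by (simp split: if_split_asm)
  next
    case False
    have labels: "?labels (x # y # ys) = insert (f x) (?labels (y # ys))"
      using False by auto
    have "f x \<in> ?labels (y # ys)" if "y \<notin> S"
      using assms(3) "3.prems"(1) False that by (force simp: component_labelling_def)
    then have "card (?labels (x # y # ys)) \<le> card (?labels (y # ys)) + (if y \<in> S then 1 else 0)"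
      unfolding labels by (simp add: card_insert_if)
    moreover have "set (x # y # ys) \<inter> S = set (y # ys) \<inter> S" using False by auto
    ultimately show ?thesis using IH False by (simp split: if_splits)
  qed
next
  case (2 x)
  show ?case
  proof (cases "x \<in> S")
    case False
    then have "set [x] - S = {x}" by auto
    then show ?thesis using False by simp
  qed simp
qed simp

lemma card_labels_path:
  assumes "is_path V E xs" "component_labelling E S f"
  shows "card (f ` (set xs - S)) \<le> card (set xs \<inter> S) + 1"
  using card_labels_distinct_walk[of E xs S f] assms
  by (auto simp: is_path_iff_successively split: if_splits)

lemma card_labels_cycle:
  assumes "is_cycle V E xs" "component_labelling E S f"
  shows "card (f ` (set xs - S)) \<le> max 1 (card (set xs \<inter> S))"
proof (cases "set xs \<inter> S = {}")
  case True
  then show ?thesis using card_labels_path[of V E xs S f] assms by (auto simp: is_cycle_def)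
next
  case False
  then obtain s where s: "s \<in> S" "s \<in> set xs" by auto
  obtain as bs where xs: "xs = as @ s # bs" using split_list[OF s(2)] by auto
  let ?rotated = "(s # bs) @ as"
  have cyc: "successively E xs" "distinct xs" "E (last xs) (hd xs)"
    using assms(1) by (auto simp: is_cycle_def is_path_iff_successively)
  have "successively E as" "successively E (s # bs)"
    using cyc(1) unfolding xs successively_append_iff by simp_all
  moreover have "E (last (s # bs)) (hd as)" if "as \<noteq> []"
    using cyc(3) that unfolding xs by simp
  ultimately have "successively E ?rotated"
    unfolding successively_append_iff by blast
  moreover have "distinct ?rotated" using cyc(2) unfolding xs by auto
  ultimately have "card (f ` (set ?rotated - S)) \<le> card (set ?rotated \<inter> S)"
    using card_labels_distinct_walk[of E ?rotated S f] assms(2) s(1) by simp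
  moreover have "set ?rotated = set xs" unfolding xs by auto
  ultimately show ?thesis by simp
qed

lemma card_le_by_label_classes:
  assumes "finite V" "A \<subseteq> V" "l0 \<in> f ` A"
    and "\<And>l. l \<in> f ` A \<Longrightarrow> card {x \<in> V. f x = l} \<le> k" "card {x \<in> V. f x = l0} \<le> k0"
  shows "card A \<le> k0 + k * (card (f ` A) - 1)"
proof -
  let ?class = "\<lambda>l. {x \<in> V. f x = l}"
  have "finite (f ` A)" using finite_subset[OF assms(2,1)] by simp
  have "card A \<le> card (\<Union>l \<in> f ` A. ?class l)"
    using assms(2) by (intro card_mono) (auto intro: finite_subset[OF _ assms(1)])
  also have "\<dots> \<le> (\<Sum>l \<in> f ` A. card (?class l))" by (rule card_UN_le) fact
  also have "\<dots> = card (?class l0) + (\<Sum>l \<in> f ` A - {l0}. card (?class l))"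
    using \<open>finite (f ` A)\<close> assms(3) by (simp add: sum.remove)
  also have "\<dots> \<le> k0 + (\<Sum>l \<in> f ` A - {l0}. k)" using assms(4,5) by (intro add_mono sum_mono) auto
  also have "\<dots> = k0 + k * (card (f ` A) - 1)"
    using assms(3) by (simp add: card_Diff_singleton)
  finally show ?thesis .
qed

lemma successively_upt:
  "(\<And>i. a \<le> i \<Longrightarrow> Suc i < b \<Longrightarrow> R i (Suc i)) \<Longrightarrow> successively R [a..<b]"
  by (auto simp: successively_conv_nth)

lemma length_eq_card_Int_Diff: "distinct xs \<Longrightarrow> length xs = card (set xs \<inter> S) + card (set xs - S)"
  by (simp add: card_Int_Diff distinct_card[symmetric])

definition ear_edge :: "nat \<Rightarrow> nat \<Rightarrow> nat \<Rightarrow> bool" where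
  "ear_edge n x y \<longleftrightarrow>
     (x < n - 1 \<and> y < n - 1 \<and> (y = Suc x \<or> x = Suc y \<or> (x = 0 \<and> y = n - 2) \<or> (y = 0 \<and> x = n - 2)))
     \<or> (x = n - 1 \<and> (y = 0 \<or> y = 3)) \<or> (y = n - 1 \<and> (x = 0 \<or> x = 3))"

lemma symp_ear_edge: "symp (ear_edge n)"
  by (auto simp: symp_def ear_edge_def)

lemma simple_graph_ear: "7 \<le> n \<Longrightarrow> simple_graph {0..<n} (ear_edge n)"
  by (auto simp: simple_graph_def ear_edge_def)

lemma ear_spanning_path:
  assumes "7 \<le> n"
  shows "is_path {0..<n} (ear_edge n) ([1, 2, 3, n - 1, 0] @ rev [4..<n - 1])"
    and "set ([1, 2, 3, n - 1, 0] @ rev [4..<n - 1]) = {0..<n}"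
proof -
  have "successively (ear_edge n) [1, 2, 3, n - 1, 0]"
    using assms unfolding ear_edge_def by simp arith
  moreover have "successively (\<lambda>x y. ear_edge n y x) [4..<n - 1]"
    by (rule successively_upt) (auto simp: ear_edge_def)
  moreover have "hd (rev [4..<n - 1]) = n - 2" using assms by (simp add: hd_rev)
  ultimately show "is_path {0..<n} (ear_edge n) ([1, 2, 3, n - 1, 0] @ rev [4..<n - 1])"
    using assms unfolding is_path_iff_successively successively_append_iff
    by (auto simp: ear_edge_def)
  show "set ([1, 2, 3, n - 1, 0] @ rev [4..<n - 1]) = {0..<n}" using assms by auto
qed

lemma ear_base_cycle: "7 \<le> n \<Longrightarrow> is_cycle {0..<n} (ear_edge n) [0..<n - 1]"
  unfolding is_cycle_def is_path_iff_successively
  by (auto intro!: successively_upt simp: ear_edge_def last_upt)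

lemma ear_cycle_length:
  assumes "7 \<le> n" "is_cycle {0..<n} (ear_edge n) xs" "n - 1 \<in> set xs"
  shows "length xs \<le> n - 2"
proof -
  \<comment> \<open>Deleting 0 and 3 leaves the components {1, 2}, {n - 1} and {4, ..., n - 2}.\<close>
  define S where "S = {0, 3::nat}"
  define side where "side x = (if x = 1 \<or> x = 2 then 0 else if x = n - 1 then 1 else 2::nat)" for x
  let ?V = "{0..<n} - S"
  let ?sides = "side ` (set xs - S)"
  have "component_labelling (ear_edge n) S side"
    using assms(1) by (auto simp: component_labelling_def ear_edge_def side_def S_def)
  moreover have S_part: "card (set xs \<inter> S) \<le> 2"
    using card_mono[of S "set xs \<inter> S"] by (auto simp: S_def)
  ultimately have "card ?sides \<le> 2"
    using card_labels_cycle[OF assms(2)] by fastforce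
  have classes: "card {x \<in> ?V. side x = l} \<le> n - 5" for l
  proof -
    let ?C = "if l = 0 then {1, 2} else if l = 1 then {n - 1} else {4..<n - 1}"
    have "{x \<in> ?V. side x = l} \<subseteq> ?C"
      by (auto simp: side_def S_def split: if_splits)
    moreover have "finite ?C" "card ?C \<le> n - 5" using assms(1) by auto
    ultimately show ?thesis by (meson card_mono le_trans)
  qed
  have ear_class: "card {x \<in> ?V. side x = 1} \<le> card {n - 1}"
    by (intro card_mono) (auto simp: side_def split: if_splits)
  have "n - 1 \<in> set xs - S" "side (n - 1) = 1"
    using assms by (auto simp: S_def side_def)
  then have "1 \<in> ?sides" by (metis image_eqI)
  moreover have "set xs - S \<subseteq> ?V"
    using assms(2) by (auto simp: is_cycle_def is_path_def)
  ultimately have "card (set xs - S) \<le> 1 + (n - 5) * (card ?sides - 1)"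
    using classes ear_class by (intro card_le_by_label_classes) auto
  also have "\<dots> \<le> 1 + (n - 5) * 1"
    using \<open>card ?sides \<le> 2\<close> by (intro add_left_mono mult_le_mono2) linarith
  finally have "card (set xs - S) \<le> n - 4" using assms(1) by linarith
  moreover have "distinct xs" using assms(2) by (simp add: is_cycle_def is_path_def)
  ultimately show ?thesis using length_eq_card_Int_Diff[of xs S] S_part assms(1) by linarith
qed

lemma ear_two_connected:
  assumes "7 \<le> n"
  shows "k_connected 2 {0..<n} (ear_edge n)"
proof (rule two_connectedI)
  show "2 < card {0..<n}" using assms by simp
  show "connected_graph {0..<n} (induced (ear_edge n) {0..<n})"
    by (rule connected_graph_if_dominating_walk[OF symp_ear_edge, where ws = "[0..<n - 1]"])
       (use assms in \<open>auto intro!: successively_upt simp: ear_edge_def\<close>)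
  fix x assume "x \<in> {0..<n}"
  let ?walk = "[Suc x..<n - 1] @ [0..<x]"
  have walk: "successively (ear_edge n) ?walk"
    using \<open>x \<in> {0..<n}\<close> unfolding successively_append_iff
    by (auto intro!: successively_upt simp: ear_edge_def last_upt)
  have ear: "\<exists>w \<in> set ?walk. ear_edge n (n - 1) w" if "x \<noteq> n - 1"
  proof (cases "x = 0")
    case True
    then have "3 \<in> set ?walk" using assms by simp
    then show ?thesis by (auto simp: ear_edge_def)
  next
    case False
    then have "0 \<in> set ?walk" by simp
    then show ?thesis by (auto simp: ear_edge_def)
  qed
  have dominating: "u \<in> set ?walk \<or> (\<exists>w \<in> set ?walk. ear_edge n u w)"
    if "u \<in> {0..<n} - {x}" for u
    using that ear by (cases "u = n - 1") auto
  show "connected_graph ({0..<n} - {x}) (induced (ear_edge n) ({0..<n} - {x}))"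
    by (rule connected_graph_if_dominating_walk[OF symp_ear_edge walk _ _ dominating])
       (use assms \<open>x \<in> {0..<n}\<close> in auto)
qed

definition hub_arms :: "(nat \<times> nat) list" where
  "hub_arms = [(1,3), (3,4), (4,0), (1,5), (5,6), (6,0), (2,7), (7,8), (8,0), (2,9), (9,10), (10,0)]"

definition hub_edge :: "nat \<Rightarrow> nat \<Rightarrow> nat \<Rightarrow> bool" where
  "hub_edge n x y \<longleftrightarrow> (x, y) \<in> set hub_arms \<or> (y, x) \<in> set hub_arms
     \<or> (x \<in> {1, 2} \<and> 11 \<le> y \<and> y < n) \<or> (y \<in> {1, 2} \<and> 11 \<le> x \<and> x < n)"

lemma symp_hub_edge: "symp (hub_edge n)"
  by (auto simp: symp_def hub_edge_def)

lemma simple_graph_hub: "12 \<le> n \<Longrightarrow> simple_graph {0..<n} (hub_edge n)"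
  by (auto simp: simple_graph_def hub_edge_def hub_arms_def)

definition hub_deletion_walk :: "nat \<Rightarrow> nat list" where
  "hub_deletion_walk x =
    (if x < 11 then
       [[4,3,1,5,6,5,1,11,2,7,8,7,2,9,10], [3,4,0,6,5,6,0,8,7,2,9,10,0],
        [7,8,0,10,9,10,0,4,3,1,5,6,0], [4,0,6,5,1,11,2,7,8,0,10,9,2], [3,1,5,6,0,8,7,2,9,10],
        [1,3,4,0,6,0,8,7,2,9,10], [5,1,3,4,0,8,7,2,9,10], [8,0,4,3,1,5,6,0,10,9,2],
        [7,2,9,10,0,4,3,1,5,6], [10,0,4,3,1,5,6,0,8,7,2], [9,2,7,8,0,4,3,1,5,6]] ! x
     else [1,3,4,0,8,7,2,9,10,0,6,5,1])"

lemma atLeast0_lessThan_11: "{0..<11} = {0, 1, 2, 3, 4, 5, 6, 7, 8, 9, 10::nat}"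
  by (auto; presburger)

lemma hub_deletion_walk:
  assumes "12 \<le> n"
  shows "successively (hub_edge n) (hub_deletion_walk x)"
    and "{0..<11} - {x} \<subseteq> set (hub_deletion_walk x)"
    and "set (hub_deletion_walk x) \<subseteq> {0..<12} - {x}"
proof -
  have "x \<in> {0..<11} \<or> 11 \<le> x" by auto
  then have "successively (hub_edge n) (hub_deletion_walk x) \<and> {0..<11} - {x} \<subseteq> set (hub_deletion_walk x)
    \<and> set (hub_deletion_walk x) \<subseteq> {0..<12} - {x}"
    using assms unfolding atLeast0_lessThan_11
    by (elim disjE insertE) (auto simp: hub_deletion_walk_def hub_edge_def hub_arms_def)
  then show "successively (hub_edge n) (hub_deletion_walk x)"
    and "{0..<11} - {x} \<subseteq> set (hub_deletion_walk x)"
    and "set (hub_deletion_walk x) \<subseteq> {0..<12} - {x}" by simp_all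
qed

lemma connected_hub_minus:
  assumes "12 \<le> n" "x \<in> {0..<n}" "X \<subseteq> {x}"
  shows "connected_graph ({0..<n} - X) (induced (hub_edge n) ({0..<n} - X))"
proof -
  define y where "y = (if X = {} then 11 else x)"
  have "X \<subseteq> {y}" using assms(3) by (auto simp: y_def)
  note walk = hub_deletion_walk[OF assms(1), of y]
  have "1 \<in> {0..<11} - {y} \<or> 2 \<in> {0..<11} - {y}" by auto
  then have hubs: "1 \<in> set (hub_deletion_walk y) \<or> 2 \<in> set (hub_deletion_walk y)"
    using walk(2) by blast
  have "u \<in> set (hub_deletion_walk y) \<or> (\<exists>w \<in> set (hub_deletion_walk y). hub_edge n u w)"
    if "u \<in> {0..<n} - X" for u
  proof (cases "u < 11")
    case True
    then have "u \<in> {0..<11} - {y}" using that \<open>X \<subseteq> {y}\<close> by (auto simp: y_def split: if_splits)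
    then show ?thesis using walk(2) by blast
  next
    case False
    then show ?thesis using hubs that by (auto simp: hub_edge_def)
  qed
  moreover have "hub_deletion_walk y \<noteq> []" using hubs by auto
  moreover have "set (hub_deletion_walk y) \<subseteq> {0..<n} - X"
    using walk(3) assms(1) \<open>X \<subseteq> {y}\<close> by auto
  ultimately show ?thesis
    by (intro connected_graph_if_dominating_walk[OF symp_hub_edge walk(1)])
qed

lemma hub_two_connected:
  assumes "12 \<le> n"
  shows "k_connected 2 {0..<n} (hub_edge n)"
proof (rule two_connectedI)
  show "connected_graph {0..<n} (induced (hub_edge n) {0..<n})"
    using connected_hub_minus[OF assms, of 0 "{}"] assms by simp
qed (use assms connected_hub_minus[OF assms] in auto)

(* The values on the hubs 0, 1, 2 are irrelevant: the hubs form the separator. *)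
definition hub_arm :: "nat \<Rightarrow> nat" where
  "hub_arm x = (if x = 3 \<or> x = 4 then 0 else if x = 5 \<or> x = 6 then 1 else if x = 7 \<or> x = 8 then 2
     else if x = 9 \<or> x = 10 then 3 else x)"

lemma component_labelling_hub_arm: "component_labelling (hub_edge n) {0, 1, 2} hub_arm"
  by (auto simp: component_labelling_def hub_edge_def hub_arms_def hub_arm_def)

lemma card_outside_hubs:
  assumes "set xs \<subseteq> {0..<n}" "w \<in> set xs" "11 \<le> w"
  shows "card (set xs - {0, 1, 2}) \<le> 1 + 2 * (card (hub_arm ` (set xs - {0, 1, 2})) - 1)"
proof (rule card_le_by_label_classes[where V = "{0..<n} - {0, 1, 2}"])
  show "hub_arm w \<in> hub_arm ` (set xs - {0, 1, 2})" using assms(2,3) by auto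
  show "card {x \<in> {0..<n} - {0, 1, 2}. hub_arm x = l} \<le> 2" for l
  proof -
    let ?C = "if l = 0 then {3, 4} else if l = 1 then {5, 6} else if l = 2 then {7, 8}
      else if l = 3 then {9, 10} else {l}"
    have "{x \<in> {0..<n} - {0, 1, 2}. hub_arm x = l} \<subseteq> ?C"
      by (auto simp: hub_arm_def split: if_splits)
    moreover have "finite ?C" "card ?C \<le> 2" by auto
    ultimately show ?thesis by (meson card_mono le_trans)
  qed
  have "{x \<in> {0..<n} - {0, 1, 2}. hub_arm x = hub_arm w} \<subseteq> {w}"
    using assms(3) by (auto simp: hub_arm_def split: if_splits)
  then show "card {x \<in> {0..<n} - {0, 1, 2}. hub_arm x = hub_arm w} \<le> 1"
    using card_mono[of "{w}"] by fastforce
qed (use assms(1) in auto)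

lemma hub_cycle_length_within_arms:
  assumes "is_cycle {0..<n} (hub_edge n) xs" "set xs \<subseteq> {0..<11}"
  shows "length xs \<le> 6"
proof -
  \<comment> \<open>The cycle meets S only in 0, so it stays inside one of the two 6-cycles through 0.\<close>
  define S where "S = {x. x = 0 \<or> 11 \<le> (x::nat)}"
  define side where "side x \<longleftrightarrow> x = 1 \<or> 3 \<le> x \<and> x \<le> 6" for x :: nat
  have "card (set xs \<inter> S) \<le> card {0::nat}"
    using assms(2) by (intro card_mono) (auto simp: S_def)
  then have S_part: "card (set xs \<inter> S) \<le> 1" by simp
  moreover have "component_labelling (hub_edge n) S side"
    by (auto simp: component_labelling_def hub_edge_def hub_arms_def S_def side_def)
  ultimately have sides: "card (side ` (set xs - S)) \<le> 1"
    using card_labels_cycle[OF assms(1)] by fastforce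
  have classes: "card {x \<in> {0..<n} - S. side x = l} \<le> 5" for l
  proof -
    let ?C = "if l then {1, 3, 4, 5, 6} else {2, 7, 8, 9, 10::nat}"
    have "{x \<in> {0..<n} - S. side x = l} \<subseteq> ?C"
      unfolding S_def side_def atLeast0_lessThan_11[symmetric] by auto
    moreover have "finite ?C" "card ?C \<le> 5" by auto
    ultimately show ?thesis by (meson card_mono le_trans)
  qed
  have "card (set xs - S) \<le> 5"
  proof (cases "set xs - S = {}")
    case False
    then obtain u where "u \<in> set xs - S" by blast
    have "card (set xs - S) \<le> 5 + 5 * (card (side ` (set xs - S)) - 1)"
      by (rule card_le_by_label_classes[where V = "{0..<n} - S"])
         (use classes \<open>u \<in> set xs - S\<close> assms(1) in \<open>auto simp: is_cycle_def is_path_def\<close>)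
    then show ?thesis using sides by simp
  next
    case True
    show ?thesis unfolding True by simp
  qed
  moreover have "distinct xs" using assms(1) by (simp add: is_cycle_def is_path_def)
  ultimately show ?thesis using length_eq_card_Int_Diff[of xs S] S_part by linarith
qed

lemma hub_cycle_length:
  assumes "is_cycle {0..<n} (hub_edge n) xs"
  shows "length xs \<le> 8"
proof (cases "\<exists>w \<in> set xs. 11 \<le> w")
  case True
  then obtain w where "w \<in> set xs" "11 \<le> w" by blast
  have "set xs \<subseteq> {0..<n}" "distinct xs" using assms by (auto simp: is_cycle_def is_path_def)
  have hubs: "card (set xs \<inter> {0, 1, 2}) \<le> 3"
    using card_mono[of "{0, 1, 2}" "set xs \<inter> {0, 1, 2::nat}"] by auto
  then have "card (hub_arm ` (set xs - {0, 1, 2})) \<le> 3"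
    using card_labels_cycle[OF assms component_labelling_hub_arm] by simp
  then have "card (set xs - {0, 1, 2}) \<le> 5"
    using card_outside_hubs[OF \<open>set xs \<subseteq> {0..<n}\<close> \<open>w \<in> set xs\<close> \<open>11 \<le> w\<close>] by linarith
  then show ?thesis using length_eq_card_Int_Diff[OF \<open>distinct xs\<close>, of "{0, 1, 2}"] hubs by linarith
next
  case False
  then have "set xs \<subseteq> {0..<11}" using assms by (force simp: is_cycle_def is_path_def)
  then show ?thesis using hub_cycle_length_within_arms[OF assms] by simp
qed

lemma hub_path_length:
  assumes "is_path {0..<n} (hub_edge n) xs" "w \<in> set xs" "11 \<le> w"
  shows "length xs \<le> 10"
proof -
  have "set xs \<subseteq> {0..<n}" "distinct xs" using assms(1) by (auto simp: is_path_def)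
  have hubs: "card (set xs \<inter> {0, 1, 2}) \<le> 3"
    using card_mono[of "{0, 1, 2}" "set xs \<inter> {0, 1, 2::nat}"] by auto
  then have "card (hub_arm ` (set xs - {0, 1, 2})) \<le> 4"
    using card_labels_path[OF assms(1) component_labelling_hub_arm] by simp
  then have "card (set xs - {0, 1, 2}) \<le> 7"
    using card_outside_hubs[OF \<open>set xs \<subseteq> {0..<n}\<close> assms(2,3)] by linarith
  then show ?thesis using length_eq_card_Int_Diff[OF \<open>distinct xs\<close>, of "{0, 1, 2}"] hubs by linarith
qed

lemma ear_detour_covered: "7 \<le> n \<Longrightarrow> detour_covered {0..<n} (ear_edge n)"
  using detour_covered_if_spanning_path ear_spanning_path by blast

lemma ear_not_cummerbund_covered:
  assumes "7 \<le> n"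
  shows "\<not> cummerbund_covered {0..<n} (ear_edge n)"
proof (rule not_cummerbund_covered_if_longer_cycle)
  show "n - 1 \<in> {0..<n}" "is_cycle {0..<n} (ear_edge n) [0..<n - 1]"
    using assms ear_base_cycle by auto
  show "length xs < length [0..<n - 1]"
    if "is_cycle {0..<n} (ear_edge n) xs" "n - 1 \<in> set xs" for xs
    using ear_cycle_length[OF assms that] assms by simp
qed

lemma hub_cummerbund_covered:
  assumes "12 \<le> n"
  shows "cummerbund_covered {0..<n} (hub_edge n)"
proof (rule cummerbund_coveredI[where m = 8])
  have cycles: "is_cycle {0..<n} (hub_edge n) [0, 4, 3, 1, w, 2, 7, 8]"
      "is_cycle {0..<n} (hub_edge n) [0, 6, 5, 1, w, 2, 9, 10]" if "11 \<le> w" "w < n" for w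
    using that by (auto simp: is_cycle_def is_path_iff_successively hub_edge_def hub_arms_def)
  fix v assume "v \<in> {0..<n}"
  show "\<exists>xs. is_cycle {0..<n} (hub_edge n) xs \<and> length xs = 8 \<and> v \<in> set xs"
  proof (cases "11 \<le> v")
    case True
    then show ?thesis using cycles(1)[of v] \<open>v \<in> {0..<n}\<close> by force
  next
    case False
    then have "v \<in> {0..<11}" by simp
    then have "v \<in> set [0, 4, 3, 1, 11, 2, 7, 8] \<or> v \<in> set [0, 6, 5, 1, 11, 2, 9, 10]"
      unfolding atLeast0_lessThan_11 by auto
    then show ?thesis using cycles[of 11] assms by force
  qed
qed (rule hub_cycle_length)

lemma hub_not_detour_covered:
  assumes "12 \<le> n"
  shows "\<not> detour_covered {0..<n} (hub_edge n)"
proof (rule not_detour_covered_if_longer_path)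
  show "11 \<in> {0..<n}" using assms by simp
  show "is_path {0..<n} (hub_edge n) [4, 3, 1, 5, 6, 0, 10, 9, 2, 7, 8]"
    using assms by (auto simp: is_path_iff_successively hub_edge_def hub_arms_def)
qed (use hub_path_length in fastforce)

theorem theorem1:
  shows "(\<forall>n::nat. n \<ge> 7 \<longrightarrow> (\<exists>(V::nat set) E. simple_graph V E \<and> card V = n \<and>
            k_connected 2 V E \<and> detour_covered V E \<and> \<not> cummerbund_covered V E))
       \<and> (\<forall>n::nat. n \<ge> 12 \<longrightarrow> (\<exists>(V::nat set) E. simple_graph V E \<and> card V = n \<and>
            k_connected 2 V E \<and> cummerbund_covered V E \<and> \<not> detour_covered V E))"
proof (intro conjI allI impI)
  fix n :: nat
  assume "n \<ge> 7"
  then show "\<exists>(V::nat set) E. simple_graph V E \<and> card V = n \<and>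
      k_connected 2 V E \<and> detour_covered V E \<and> \<not> cummerbund_covered V E"
    using simple_graph_ear ear_two_connected ear_detour_covered ear_not_cummerbund_covered
    by (intro exI[of _ "{0..<n}"] exI[of _ "ear_edge n"]) simp
next
  fix n :: nat
  assume "n \<ge> 12"
  then show "\<exists>(V::nat set) E. simple_graph V E \<and> card V = n \<and>
      k_connected 2 V E \<and> cummerbund_covered V E \<and> \<not> detour_covered V E"
    using simple_graph_hub hub_two_connected hub_cummerbund_covered hub_not_detour_covered
    by (intro exI[of _ "{0..<n}"] exI[of _ "hub_edge n"]) simp
qed

end
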